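(* Let $f(z)=z+\sum_{n=2}^\infty a_nz^n\in\mathcal{S}^*_{car}$ and let $f_2(z)=z+a_2z^2$ be its second partial sum. Then $f_2$ is starlike in $|z|<1/2$ and convex in $|z|<1/4$, and $f_2(\rho z)/\rho\in\mathcal{S}^*_{car}$ for $0<\rho\le1/3$. All three constants $1/2$, $1/4$, $1/3$ are sharp (they cannot be replaced by larger numbers).
   Context: $\mathbb{D}=\{z:|z|<1\}$; $\mathcal{A}$ is the class of analytic $f$ on $\mathbb{D}$ with $f(0)=0$, $f'(0)=1$. $F\prec G$ means $F=G\circ w$ for an analytic $w:\mathbb{D}\to\mathbb{D}$ with $w(0)=0$. $\mathcal{S}^*_{car}$ is the class of $f\in\mathcal{A}$ with $zf'(z)/f(z)\prec 1+z+z^2/2$ in $\mathbb{D}$. A function is starlike (resp. convex) in $|z|<r$ if it maps that disk univalently onto a domain starlike with respect to $0$ (resp. convex). *)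

theory Defs
  imports "HOL-Analysis.Analysis"
begin

definition unit_disc :: "complex set" where
  "unit_disc = ball 0 1"

definition classA :: "(complex \<Rightarrow> complex) \<Rightarrow> bool" where
  "classA f \<longleftrightarrow> f holomorphic_on unit_disc \<and> f 0 = 0 \<and> deriv f 0 = 1"

definition subordinate :: "(complex \<Rightarrow> complex) \<Rightarrow> (complex \<Rightarrow> complex) \<Rightarrow> bool" where
  "subordinate F G \<longleftrightarrow>
     (\<exists>w. w holomorphic_on unit_disc \<and> w ` unit_disc \<subseteq> unit_disc \<and> w 0 = 0 \<and>
          (\<forall>z\<in>unit_disc. F z = G (w z)))"

text \<open>The quotient z f'(z)/f(z), with its removable singularity at 0 filled by the value 1.\<close>
definition starquot :: "(complex \<Rightarrow> complex) \<Rightarrow> complex \<Rightarrow> complex" where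
  "starquot f z = (if z = 0 then 1 else z * deriv f z / f z)"

definition cardioid_fun :: "complex \<Rightarrow> complex" where
  "cardioid_fun z = 1 + z + z^2 / 2"

definition S_car :: "(complex \<Rightarrow> complex) \<Rightarrow> bool" where
  "S_car f \<longleftrightarrow> classA f \<and> subordinate (starquot f) cardioid_fun"

definition coeff2 :: "(complex \<Rightarrow> complex) \<Rightarrow> complex" where
  "coeff2 f = deriv (deriv f) 0 / 2"

definition partial2 :: "(complex \<Rightarrow> complex) \<Rightarrow> complex \<Rightarrow> complex" where
  "partial2 f z = z + coeff2 f * z^2"

definition starlike_in :: "(complex \<Rightarrow> complex) \<Rightarrow> real \<Rightarrow> bool" where
  "starlike_in g r \<longleftrightarrow> g holomorphic_on ball 0 r \<and> inj_on g (ball 0 r) \<and>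
     0 \<in> g ` ball 0 r \<and> (\<forall>x\<in>g ` ball 0 r. closed_segment 0 x \<subseteq> g ` ball 0 r)"

definition convex_in :: "(complex \<Rightarrow> complex) \<Rightarrow> real \<Rightarrow> bool" where
  "convex_in g r \<longleftrightarrow> g holomorphic_on ball 0 r \<and> inj_on g (ball 0 r) \<and> convex (g ` ball 0 r)"

end

(* Writing z f'/f = 1 + w + w^2/2 with a Schwarz function w and comparing second
   derivatives at 0 gives a_2 = w'(0), so |a_2| <= 1 by Schwarz's lemma; the function
   z exp(z + z^2/4), for which w is the identity, has a_2 = 1.

   Completing the square, 4b(z + b z^2) = (1 + 2bz)^2 - 1, so z + b z^2 maps |z| < r onto
   an affine image of the set of squares of the disc |p - 1| < 2|b|r.  These squares form
   a set that is starlike with respect to 1 when 2|b|r <= 1 and convex when 2|b|r <= 1/2,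
   which gives the radii 1/2 and 1/4 for |b| <= 1.  For z + b z^2 the quotient z f'/f is
   (1 + 2bz)/(1 + bz) = 1 + w + w^2/2 with w = sqrt((1 + 3bz)/(1 + bz)) - 1, and w maps
   the unit disc into itself when |b| <= 1/3.

   Sharpness comes from the partial sum z + z^2 of the extremal function: it takes equal
   values at -1/2 +- e, and its image of |z| < r for 1/4 < r <= 1/2 contains the images of
   -1/4 +- iy but not their midpoint, a real number below every real value it takes there.
   For rho > 1/3 the quotient z f'/f of z + rho z^2 equals 1/2 at z = -1/(3 rho), and
   1 + w + w^2/2 = 1/2 only for w = -1. *)

theory Submission
  imports Defs "HOL-Complex_Analysis.Conformal_Mappings"
begin

lemma Re_csqrt_power2: "Re (csqrt w) ^ 2 = (cmod w + Re w) / 2"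
proof -
  have "0 \<le> cmod w + Re w" using abs_Re_le_cmod[of w] by linarith
  then show ?thesis by simp
qed

lemma Re_pos_if_norm_sub_one_lt: "cmod (p - 1) < 1 \<Longrightarrow> 0 < Re p"
  using abs_Re_le_cmod[of "p - 1"] by simp

lemma Re_csqrt_segment_ge:
  assumes t: "0 \<le> t" "t \<le> 1"
  shows "t * Re p \<le> Re (csqrt (1 - of_real t + of_real t * p^2))"
proof -
  define W where "W = 1 - of_real t + of_real t * p^2"
  define x y where "x = Re p" and "y = Im p"
  have ReW: "Re W = 1 - t + t * (x^2 - y^2)" and ImW: "Im W = 2 * t * x * y"
    by (simp_all add: W_def x_def y_def Re_power2 Im_power2)
  have normW: "(cmod W)^2 = (Re W)^2 + (Im W)^2" by (simp add: cmod_power2)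
  have "0 \<le> (1 - t) * (1 + y^2) + t * (1 - t) * x^2"
    using t by (intro add_nonneg_nonneg mult_nonneg_nonneg) auto
  also have "\<dots> = y^2 + Re W - (t * x)^2"
    by (simp add: ReW power2_eq_square algebra_simps)
  finally have "0 \<le> 4 * (t * x)^2 * (y^2 + Re W - (t * x)^2)" by (intro mult_nonneg_nonneg) simp_all
  also have "\<dots> = (cmod W)^2 - (2 * (t * x)^2 - Re W)^2"
    by (simp only: normW) (simp add: ImW power2_eq_square algebra_simps)
  finally have "(2 * (t * x)^2 - Re W)^2 \<le> (cmod W)^2" by linarith
  then have "2 * (t * x)^2 - Re W \<le> cmod W" by (rule power2_le_imp_le) simp
  then have "(t * x)^2 \<le> Re (csqrt W) ^ 2"
    by (simp only: Re_csqrt_power2) (simp add: field_simps)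
  then have "t * x \<le> Re (csqrt W)" using Re_csqrt[of W] by (rule power2_le_imp_le)
  then show ?thesis by (simp only: W_def x_def)
qed

(* (s - 1)(s + 1) = t (p - 1)(p + 1): were s farther from 1 than p, it would satisfy
   |s + 1| < t |p + 1|, which is incompatible with Re s >= t Re p. *)
lemma norm_csqrt_segment_sub_one_le:
  assumes t: "0 \<le> t" "t \<le> 1" and p: "0 < Re p"
  shows "cmod (csqrt (1 - of_real t + of_real t * p^2) - 1) \<le> cmod (p - 1)"
proof (rule ccontr)
  define s where "s = csqrt (1 - of_real t + of_real t * p^2)"
  assume "\<not> ?thesis"
  then have far: "cmod (p - 1) < cmod (s - 1)" by (simp add: s_def)
  have "t \<noteq> 0" using far by (auto simp: s_def)
  with t have t0: "0 < t" by simp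
  have "(s - 1) * (s + 1) = of_real t * ((p - 1) * (p + 1))"
    by (simp add: s_def algebra_simps flip: power2_eq_square)
  then have prod: "cmod (s - 1) * cmod (s + 1) = t * (cmod (p - 1) * cmod (p + 1))"
    using t0 by (metis norm_mult norm_of_real abs_of_pos)
  have "0 < cmod (p + 1)" using p by (auto simp: complex_eq_iff)
  then have "t * (cmod (p - 1) * cmod (p + 1)) < t * (cmod (s - 1) * cmod (p + 1))"
    using far t0 by simp
  then have "cmod (s - 1) * cmod (s + 1) < cmod (s - 1) * (t * cmod (p + 1))"
    by (simp only: prod) (simp add: algebra_simps)
  then have "cmod (s + 1) < t * cmod (p + 1)" by (simp add: mult_less_cancel_left)
  then have "cmod (s + 1)^2 < t^2 * cmod (p + 1)^2"
    by (simp add: power_strict_mono flip: power_mult_distrib)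
  moreover have "t^2 * cmod (p - 1)^2 < t^2 * cmod (s - 1)^2" using far t0 by (simp add: power_strict_mono)
  ultimately have "cmod (s + 1)^2 - t^2 * cmod (s - 1)^2 < t^2 * (cmod (p + 1)^2 - cmod (p - 1)^2)"
    by (simp add: right_diff_distrib)
  also have "cmod (p + 1)^2 - cmod (p - 1)^2 = 4 * Re p"
    by (simp only: cmod_power2) (simp add: power2_eq_square algebra_simps)
  finally have lt: "cmod (s + 1)^2 - t^2 * cmod (s - 1)^2 < t^2 * (4 * Re p)" .
  have "cmod (s + 1)^2 - t^2 * cmod (s - 1)^2
          = (1 - t^2) * (cmod s ^ 2 + 1) + 2 * (1 + t^2) * Re s"
    by (simp only: cmod_power2) (simp add: power2_eq_square algebra_simps)
  moreover have "0 \<le> (1 - t^2) * (cmod s ^ 2 + 1)" using t by (simp add: power_le_one)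
  moreover have "t * Re p \<le> Re s" unfolding s_def by (rule Re_csqrt_segment_ge[OF t])
  then have "2 * (1 + t^2) * (t * Re p) \<le> 2 * (1 + t^2) * Re s" by (intro mult_left_mono) simp_all
  ultimately have "2 * (1 + t^2) * (t * Re p) < t^2 * (4 * Re p)" using lt by linarith
  moreover have "2 * (1 + t^2) * (t * Re p) - t^2 * (4 * Re p) = 2 * t * Re p * (1 - t)^2"
    by (simp add: power2_eq_square algebra_simps)
  moreover have "0 \<le> 2 * t * Re p * (1 - t)^2" using t p by simp
  ultimately show False by linarith
qed

lemma norm_sub_one_le_iff_square:
  assumes "0 \<le> \<rho>" "\<rho> \<le> 1" "0 \<le> Re p"
  shows "cmod (p - 1) \<le> \<rho> \<longleftrightarrow>
           cmod (p^2) ^ 2 - 2 * \<rho>^2 * cmod (p^2) + (1 - \<rho>^2)^2 \<le> 2 * Re (p^2)"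
proof -
  define x y n where "x = Re p" and "y = Im p" and "n = x^2 + y^2"
  have n: "cmod (p^2) = n" by (simp add: norm_power cmod_power2 n_def x_def y_def)
  have "\<rho>^2 \<le> 1" using assms by (simp add: power_le_one)
  then have n_nonneg: "0 \<le> n + (1 - \<rho>^2)" by (simp add: n_def)
  have "cmod (p - 1) \<le> \<rho> \<longleftrightarrow> cmod (p - 1) ^ 2 \<le> \<rho>^2"
    using power2_le_iff_abs_le[OF assms(1), of "cmod (p - 1)"] by simp
  also have "\<dots> \<longleftrightarrow> (x - 1)^2 + y^2 \<le> \<rho>^2"
    by (simp add: cmod_power2 x_def y_def)
  also have "\<dots> \<longleftrightarrow> n + (1 - \<rho>^2) \<le> 2 * x"
    by (simp add: n_def power2_eq_square algebra_simps)
  also have "\<dots> \<longleftrightarrow> (n + (1 - \<rho>^2))^2 \<le> (2 * x)^2"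
    using power2_le_iff_abs_le[of "2 * x" "n + (1 - \<rho>^2)"] assms(3) n_nonneg by (simp add: x_def)
  also have "\<dots> \<longleftrightarrow> n^2 - 2 * \<rho>^2 * n + (1 - \<rho>^2)^2 \<le> 2 * Re (p^2)"
    by (simp add: Re_power2 n_def x_def y_def power2_eq_square algebra_simps)
  finally show ?thesis by (simp add: n)
qed

(* The condition of norm_sub_one_le_iff_square is convex in (|W|, Re W) and increasing in
   |W| for |W| >= rho^2; rho <= 1/2 keeps convex combinations of squares in that range. *)
lemma norm_csqrt_convex_comb_sub_one_le:
  assumes \<rho>: "0 \<le> \<rho>" "\<rho> \<le> 1/2" and p1: "cmod (p1 - 1) \<le> \<rho>" and p2: "cmod (p2 - 1) \<le> \<rho>"
    and t: "0 \<le> t" "t \<le> 1"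
  shows "cmod (csqrt ((1 - of_real t) * p1^2 + of_real t * p2^2) - 1) \<le> \<rho>"
proof -
  define g where "g r = r^2 - 2 * \<rho>^2 * r" for r :: real
  define \<kappa> where "\<kappa> = (1 - \<rho>^2)^2"
  define W where "W = (1 - of_real t) * p1^2 + of_real t * p2^2"
  define r1 r2 where "r1 = cmod (p1^2)" and "r2 = cmod (p2^2)"
  define R where "R = (1 - t) * r1 + t * r2"
  have disc: "g (cmod (p^2)) + \<kappa> \<le> 2 * Re (p^2) \<and> \<rho>^2 \<le> cmod (p^2)" if "cmod (p - 1) \<le> \<rho>" for p
  proof
    have "0 \<le> Re p" using that \<rho> Re_pos_if_norm_sub_one_lt[of p] by linarith
    then show "g (cmod (p^2)) + \<kappa> \<le> 2 * Re (p^2)"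
      using norm_sub_one_le_iff_square[of \<rho> p] that \<rho> by (simp add: g_def \<kappa>_def)
    have "1 - cmod (1 - p) \<le> cmod p" using norm_triangle_ineq2[of 1 "1 - p"] by simp
    then have "\<rho> \<le> cmod p" using that \<rho> by (simp add: norm_minus_commute)
    then show "\<rho>^2 \<le> cmod (p^2)" using \<rho> by (simp add: norm_power power_mono)
  qed
  have "cmod W \<le> cmod ((1 - of_real t) * p1^2) + cmod (of_real t * p2^2)"
    unfolding W_def by (rule norm_triangle_ineq)
  also have "\<dots> = R"
  proof -
    have "1 - complex_of_real t = of_real (1 - t)" by simp
    then have "cmod (1 - complex_of_real t) = 1 - t" using t by (simp only: norm_of_real)
    then show ?thesis using t by (simp add: R_def r1_def r2_def norm_mult)
  qed
  finally have W_le: "cmod W \<le> R" .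
  have "g R \<le> (1 - t) * g r1 + t * g r2"
  proof -
    have "(1 - t) * g r1 + t * g r2 - g R = t * (1 - t) * (r1 - r2)^2"
      by (simp add: g_def R_def power2_eq_square algebra_simps)
    moreover have "0 \<le> t * (1 - t) * (r1 - r2)^2" using t by simp
    ultimately show ?thesis by linarith
  qed
  also have "\<dots> \<le> (1 - t) * (2 * Re (p1^2) - \<kappa>) + t * (2 * Re (p2^2) - \<kappa>)"
    using disc[OF p1] disc[OF p2] t unfolding r1_def r2_def
    by (intro add_mono mult_left_mono) auto
  also have "\<dots> = 2 * Re W - \<kappa>" by (simp add: W_def algebra_simps)
  finally have gR: "g R + \<kappa> \<le> 2 * Re W" by simp
  have W_ge: "\<rho>^2 \<le> cmod W"
  proof (rule ccontr)
    assume "\<not> ?thesis"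
    then have "Re W < \<rho>^2" using complex_Re_le_cmod[of W] by linarith
    moreover have "g R + (\<rho>^2)^2 = (R - \<rho>^2)^2" by (simp add: g_def power2_eq_square algebra_simps)
    moreover have "\<kappa> = 1 - 2 * \<rho>^2 + (\<rho>^2)^2" by (simp add: \<kappa>_def power2_eq_square algebra_simps)
    moreover have "4 * \<rho>^2 \<le> 1"
      using \<rho> power_mono[of \<rho> "1/2" 2] by (simp add: power_divide)
    ultimately show False using gR zero_le_power2[of "R - \<rho>^2"] by linarith
  qed
  have "g R - g (cmod W) = (R - cmod W) * (R + cmod W - 2 * \<rho>^2)"
    by (simp add: g_def power2_eq_square algebra_simps)
  also have "\<dots> \<ge> 0" using W_le W_ge by simp
  finally have "g (cmod (csqrt W ^ 2)) + \<kappa> \<le> 2 * Re (csqrt W ^ 2)" using gR by simp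
  then show ?thesis
    using norm_sub_one_le_iff_square[of \<rho> "csqrt W"] \<rho> Re_csqrt[of W]
    by (simp add: g_def \<kappa>_def W_def)
qed

definition quad :: "complex \<Rightarrow> complex \<Rightarrow> complex" where
  "quad b z = z + b * z^2"

lemma partial2_eq_quad: "partial2 f = quad (coeff2 f)"
  by (simp add: fun_eq_iff partial2_def quad_def)

lemma partial2_dilation_eq_quad:
  assumes "c \<noteq> 0" shows "(\<lambda>z. partial2 f (c * z) / c) = quad (coeff2 f * c)"
  using assms by (simp add: fun_eq_iff partial2_def quad_def power2_eq_square field_simps)

lemma quad_0 [simp]: "quad 0 = (\<lambda>z. z)"
  by (simp add: fun_eq_iff quad_def)

lemma holomorphic_on_quad: "quad b holomorphic_on S"
  unfolding quad_def by (intro holomorphic_intros)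

lemma deriv_quad: "deriv (quad b) z = 1 + 2 * b * z"
  unfolding quad_def by (rule DERIV_imp_deriv) (auto intro!: derivative_eq_intros)

lemma quad_complete_square: "4 * b * quad b z = (1 + 2 * b * z)^2 - 1"
  by (simp add: quad_def power2_eq_square algebra_simps)

lemma quad_image_memI:
  assumes b: "b \<noteq> 0" and s: "s^2 = 1 + 4 * b * y" and r: "cmod (s - 1) < 2 * cmod b * r"
  shows "y \<in> quad b ` ball 0 r"
proof (rule image_eqI)
  have "1 + 2 * b * ((s - 1) / (2 * b)) = s" using b by simp
  then have "4 * b * quad b ((s - 1) / (2 * b)) = s^2 - 1" by (simp only: quad_complete_square)
  also have "\<dots> = 4 * b * y" using s by simp
  finally have "4 * b * quad b ((s - 1) / (2 * b)) = 4 * b * y" .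
  then show "y = quad b ((s - 1) / (2 * b))" using b by simp
  show "(s - 1) / (2 * b) \<in> ball 0 r"
    using b r by (simp add: norm_divide norm_mult divide_less_eq mult.commute)
qed

lemma inj_on_quad:
  assumes "2 * cmod b * r \<le> 1" shows "inj_on (quad b) (ball 0 r)"
proof (rule inj_onI)
  fix z1 z2 assume z1: "z1 \<in> ball 0 r" and z2: "z2 \<in> ball 0 r" and eq: "quad b z1 = quad b z2"
  have "cmod (b * (z1 + z2)) < 1"
  proof (cases "b = 0")
    case False
    have "cmod (z1 + z2) < 2 * r" using z1 z2 norm_triangle_ineq[of z1 z2] by simp
    then have "cmod b * cmod (z1 + z2) < cmod b * (2 * r)" using False by simp
    then show ?thesis using assms by (simp add: norm_mult)
  qed simp
  then have "1 + b * (z1 + z2) \<noteq> 0"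
    by (metis add.inverse_unique norm_minus_cancel norm_one order_less_irrefl)
  moreover have "(z1 - z2) * (1 + b * (z1 + z2)) = 0"
    using eq by (simp add: quad_def power2_eq_square algebra_simps)
  ultimately show "z1 = z2" by simp
qed

lemma starlike_in_quad:
  assumes r: "0 < r" "2 * cmod b * r \<le> 1" shows "starlike_in (quad b) r"
  unfolding starlike_in_def
proof (intro conjI holomorphic_on_quad inj_on_quad[OF r(2)] ballI subsetI)
  show "0 \<in> quad b ` ball 0 r" using r by (intro image_eqI[of _ _ 0]) (auto simp: quad_def)
  fix x y assume x: "x \<in> quad b ` ball 0 r" and y: "y \<in> closed_segment 0 x"
  show "y \<in> quad b ` ball 0 r"
  proof (cases "b = 0")
    case True
    then show ?thesis
      using x y r closed_segment_subset[OF _ _ convex_ball, of 0 0 r x] by auto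
  next
    case False
    obtain z where z: "cmod z < r" and xz: "x = quad b z" using x by auto
    obtain u where u: "0 \<le> u" "u \<le> 1" and yu: "y = of_real u * x"
      using y by (auto simp: closed_segment_def scaleR_conv_of_real)
    define p where "p = 1 + 2 * b * z"
    have p_near: "cmod (p - 1) < 2 * cmod b * r" using False z by (simp add: p_def norm_mult)
    then have "0 < Re p" using r(2) Re_pos_if_norm_sub_one_lt[of p] by linarith
    define s where "s = csqrt (1 - of_real u + of_real u * p^2)"
    have "p^2 = 1 + 4 * b * x" by (simp add: p_def xz quad_complete_square)
    then have "s^2 = 1 + 4 * b * y" by (simp add: s_def yu algebra_simps)
    moreover have "cmod (s - 1) < 2 * cmod b * r"
      using norm_csqrt_segment_sub_one_le[OF u \<open>0 < Re p\<close>] p_near by (simp add: s_def)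
    ultimately show ?thesis by (rule quad_image_memI[OF False])
  qed
qed

lemma convex_in_quad:
  assumes r: "4 * cmod b * r \<le> 1" shows "convex_in (quad b) r"
  unfolding convex_in_def
proof (intro conjI holomorphic_on_quad inj_on_quad)
  show "2 * cmod b * r \<le> 1" using r by (cases "r \<le> 0") (auto simp: mult_nonneg_nonpos)
  show "convex (quad b ` ball 0 r)"
  proof (cases "b = 0")
    case False
    show ?thesis
    proof (rule convexI)
      fix x y and u v :: real
      assume "x \<in> quad b ` ball 0 r" "y \<in> quad b ` ball 0 r" and uv: "0 \<le> u" "0 \<le> v" "u + v = 1"
      then obtain z1 z2 where z: "cmod z1 < r" "cmod z2 < r" and xy: "x = quad b z1" "y = quad b z2"
        by auto
      define p1 p2 where "p1 = 1 + 2 * b * z1" and "p2 = 1 + 2 * b * z2"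
      define \<rho> where "\<rho> = max (cmod (p1 - 1)) (cmod (p2 - 1))"
      have "\<rho> < 2 * cmod b * r"
        using False z by (simp add: \<rho>_def p1_def p2_def norm_mult)
      then have \<rho>: "0 \<le> \<rho>" "\<rho> \<le> 1/2" "\<rho> < 2 * cmod b * r"
        using r by (auto simp: \<rho>_def le_max_iff_disj)
      define s where "s = csqrt ((1 - of_real v) * p1^2 + of_real v * p2^2)"
      have squares: "p1^2 = 1 + 4 * b * x" "p2^2 = 1 + 4 * b * y"
        by (simp_all add: p1_def p2_def xy quad_complete_square)
      have "u = 1 - v" using uv(3) by simp
      then have "s^2 = 1 + 4 * b * (u *\<^sub>R x + v *\<^sub>R y)"
        unfolding \<open>u = 1 - v\<close> by (simp add: s_def squares scaleR_conv_of_real algebra_simps)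
      moreover have "cmod (s - 1) \<le> \<rho>"
        unfolding s_def using uv by (intro norm_csqrt_convex_comb_sub_one_le[OF \<rho>(1,2)]) (auto simp: \<rho>_def)
      then have "cmod (s - 1) < 2 * cmod b * r" using \<rho>(3) by linarith
      ultimately show "u *\<^sub>R x + v *\<^sub>R y \<in> quad b ` ball 0 r" by (rule quad_image_memI[OF False])
    qed
  qed simp
qed

lemma starquot_quad:
  assumes "1 + b * z \<noteq> 0" shows "starquot (quad b) z = (1 + 2 * b * z) / (1 + b * z)"
proof (cases "z = 0")
  case False
  then have "starquot (quad b) z = (z * (1 + 2 * b * z)) / (z * (1 + b * z))"
    by (simp add: starquot_def deriv_quad quad_def power2_eq_square algebra_simps)
  then show ?thesis using False by simp
qed (simp add: starquot_def)

lemma cardioid_fun_csqrt_ratio: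
  assumes "1 + x \<noteq> 0"
  shows "cardioid_fun (csqrt (1 + 3 * x) / csqrt (1 + x) - 1) = (1 + 2 * x) / (1 + x)"
proof -
  have shifted: "cardioid_fun (q - 1) = (1 + q^2) / 2" for q
    by (simp add: cardioid_fun_def power2_eq_square field_simps)
  have "cardioid_fun (csqrt (1 + 3 * x) / csqrt (1 + x) - 1) = (1 + (1 + 3 * x) / (1 + x)) / 2"
    by (simp only: shifted power_divide power2_csqrt)
  also have "1 + (1 + 3 * x) / (1 + x) = 2 * ((1 + 2 * x) / (1 + x))"
    using assms by (simp add: field_simps)
  finally show ?thesis by (metis nonzero_mult_div_cancel_left zero_neq_numeral)
qed

lemma norm_csqrt_ratio_sub_one_lt:
  assumes x: "cmod x < 1/3" shows "cmod (csqrt (1 + 3 * x) / csqrt (1 + x) - 1) < 1"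
proof -
  define \<alpha> \<beta> where "\<alpha> = csqrt (1 + 3 * x)" and "\<beta> = csqrt (1 + x)"
  have "0 \<le> Re \<alpha>" "0 \<le> Re \<beta>" unfolding \<alpha>_def \<beta>_def by (rule Re_csqrt)+
  have norm: "1 - cmod x \<le> cmod (1 + x)" using norm_triangle_ineq2[of 1 "-x"] by simp
  moreover have "1 - cmod x \<le> Re (1 + x)" using abs_Re_le_cmod[of x] by simp
  ultimately have half: "1 - cmod x \<le> (cmod (1 + x) + Re (1 + x)) / 2" by (simp add: field_simps)
  have "(1 - cmod x)^2 \<le> cmod (1 + x) * ((cmod (1 + x) + Re (1 + x)) / 2)"
    unfolding power2_eq_square using x by (intro mult_mono[OF norm half]) simp_all
  also have "\<dots> = (cmod \<beta> * Re \<beta>)^2"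
    by (simp only: \<beta>_def power_mult_distrib Re_csqrt_power2 norm_csqrt real_sqrt_pow2 norm_ge_zero)
  finally have "1 - cmod x \<le> cmod \<beta> * Re \<beta>"
    by (rule power2_le_imp_le) (simp add: \<open>0 \<le> Re \<beta>\<close>)
  with x have \<beta>_bound: "2 * cmod x < cmod \<beta> * Re \<beta>" by linarith
  then have "Re \<beta> \<noteq> 0" using norm_ge_zero[of x] by auto
  then have "0 < Re \<beta>" using \<open>0 \<le> Re \<beta>\<close> by simp
  then have "\<beta> \<noteq> 0" by auto
  have "Re \<beta> \<le> cmod (\<alpha> + \<beta>)"
    using complex_Re_le_cmod[of "\<alpha> + \<beta>"] \<open>0 \<le> Re \<alpha>\<close> by simp
  then have "cmod (\<alpha> - \<beta>) * Re \<beta> \<le> cmod ((\<alpha> - \<beta>) * (\<alpha> + \<beta>))"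
    by (simp add: norm_mult mult_left_mono)
  also have "(\<alpha> - \<beta>) * (\<alpha> + \<beta>) = \<alpha>^2 - \<beta>^2" by (simp add: power2_eq_square algebra_simps)
  also have "\<dots> = 2 * x" by (simp add: \<alpha>_def \<beta>_def)
  also have "cmod (2 * x) < cmod \<beta> * Re \<beta>" using \<beta>_bound by (simp add: norm_mult)
  finally have "cmod (\<alpha> - \<beta>) < cmod \<beta>" using \<open>0 < Re \<beta>\<close> by simp
  moreover have "\<alpha> / \<beta> - 1 = (\<alpha> - \<beta>) / \<beta>" using \<open>\<beta> \<noteq> 0\<close> by (simp add: field_simps)
  ultimately show ?thesis using \<open>\<beta> \<noteq> 0\<close> by (simp add: \<alpha>_def \<beta>_def norm_divide)
qed

lemma classA_quad: "classA (quad b)"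
  by (simp add: classA_def holomorphic_on_quad deriv_quad) (simp add: quad_def)

lemma S_car_quad:
  assumes b: "cmod b \<le> 1/3" shows "S_car (quad b)"
  unfolding S_car_def subordinate_def
proof (intro conjI classA_quad exI[of _ "\<lambda>z. csqrt (1 + 3 * (b * z)) / csqrt (1 + b * z) - 1"])
  have small: "cmod (b * z) < 1/3" if "z \<in> unit_disc" for z
  proof (cases "b = 0")
    case False
    then have "cmod b * cmod z < cmod b * 1" using that by (simp add: unit_disc_def)
    then show ?thesis using b by (simp add: norm_mult)
  qed simp
  have Re_pos: "0 < Re (1 + c * (b * z))" if "z \<in> unit_disc" "cmod c \<le> 3" for z c
  proof -
    have "cmod (c * (b * z)) \<le> 3 * cmod (b * z)"
      using that(2) by (simp add: norm_mult mult_right_mono)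
    then show ?thesis
      using small[OF that(1)] abs_Re_le_cmod[of "c * (b * z)"] by simp
  qed
  have nonzero: "1 + b * z \<noteq> 0" if "z \<in> unit_disc" for z
  proof
    assume "1 + b * z = 0"
    with Re_pos[OF that, of 1] show False by simp
  qed
  show "(\<lambda>z. csqrt (1 + 3 * (b * z)) / csqrt (1 + b * z) - 1) holomorphic_on unit_disc"
  proof -
    have "1 + c * (b * z) \<notin> \<real>\<^sub>\<le>\<^sub>0" if "z \<in> unit_disc" "cmod c \<le> 3" for z c
      using Re_pos[OF that] by (auto simp: complex_nonpos_Reals_iff)
    from this[of _ 1] this[of _ 3] nonzero show ?thesis by (intro holomorphic_intros) auto
  qed
  show "(\<lambda>z. csqrt (1 + 3 * (b * z)) / csqrt (1 + b * z) - 1) ` unit_disc \<subseteq> unit_disc"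
    using small norm_csqrt_ratio_sub_one_lt by (auto simp: unit_disc_def)
  show "\<forall>z\<in>unit_disc. starquot (quad b) z
          = cardioid_fun (csqrt (1 + 3 * (b * z)) / csqrt (1 + b * z) - 1)"
    using nonzero by (simp add: starquot_quad cardioid_fun_csqrt_ratio mult.assoc)
qed simp

lemma cardioid_fun_nonzero:
  assumes "cmod v < 1" shows "cardioid_fun v \<noteq> 0"
proof
  assume "cardioid_fun v = 0"
  then have "(1 + v)^2 = \<i>^2" by (simp add: cardioid_fun_def power2_eq_square field_simps)
  then have "1 + v = \<i> \<or> 1 + v = - \<i>" by (simp only: power2_eq_iff)
  then have "v = \<i> - 1 \<or> v = - \<i> - 1" by (metis add_diff_cancel_left')
  then have "cmod v = sqrt 2" by (auto simp: cmod_def)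
  with assms show False by (simp add: real_sqrt_less_iff)
qed

lemma deriv_deriv_zero_eq_of_mult_eq:
  fixes f P :: "complex \<Rightarrow> complex"
  assumes holo: "f holomorphic_on S" "P holomorphic_on S" and S: "open S" "0 \<in> S"
    and f0: "f 0 = 0" "deriv f 0 = 1" and P0: "P 0 = 1"
    and eq: "\<And>z. z \<in> S \<Longrightarrow> P z * f z = z * deriv f z"
  shows "deriv (deriv f) 0 = 2 * deriv P 0"
proof -
  have holo': "deriv f holomorphic_on S" "(\<lambda>z. z * deriv f z) holomorphic_on S"
    using holo S by (auto intro!: holomorphic_intros holomorphic_deriv)
  have "(deriv ^^ 2) (\<lambda>z. P z * f z) 0 = (deriv ^^ 2) (\<lambda>z. z * deriv f z) 0"
    using holo holo' S eq by (intro higher_deriv_transform_within_open[of _ S]) (auto intro!: holomorphic_intros)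
  also have "(deriv ^^ 2) (\<lambda>z. P z * f z) 0 = deriv (deriv f) 0 + 2 * deriv P 0"
    using higher_deriv_mult[OF holo(2,1) S, where n = 2] f0 P0
    by (simp add: numeral_2_eq_2 sum.atLeast0_atMost_Suc)
  moreover have "(deriv ^^ 2) (\<lambda>z. z * deriv f z) 0 = 2 * deriv (deriv f) 0"
    using higher_deriv_mult[OF holomorphic_on_ident holo'(1) S, where n = 2]
    by (simp add: numeral_2_eq_2 sum.atLeast0_atMost_Suc)
  ultimately show ?thesis by simp
qed

lemma norm_coeff2_le_1:
  assumes "S_car f" shows "cmod (coeff2 f) \<le> 1"
proof -
  obtain w where w: "w holomorphic_on ball 0 1" "w ` ball 0 1 \<subseteq> ball 0 1" "w 0 = 0"
    and sub: "\<And>z. z \<in> ball 0 1 \<Longrightarrow> starquot f z = cardioid_fun (w z)"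
    using assms by (auto simp: S_car_def subordinate_def unit_disc_def)
  have f: "f holomorphic_on ball 0 1" "f 0 = 0" "deriv f 0 = 1"
    using assms by (auto simp: S_car_def classA_def unit_disc_def)
  define P where "P z = cardioid_fun (w z)" for z
  have "P z * f z = z * deriv f z" if z: "z \<in> ball 0 1" for z
  proof (cases "z = 0")
    case False
    have "P z \<noteq> 0" using w(2) z cardioid_fun_nonzero by (force simp: P_def)
    moreover have "z * deriv f z / f z = P z" using sub[OF z] False by (simp add: P_def starquot_def)
    ultimately show ?thesis by (metis divide_eq_0_iff nonzero_eq_divide_eq)
  qed (simp add: f)
  moreover have "P holomorphic_on ball 0 1"
    unfolding P_def cardioid_fun_def using w(1) by (intro holomorphic_intros) auto
  ultimately have "deriv (deriv f) 0 = 2 * deriv P 0"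
    using f w(3) by (intro deriv_deriv_zero_eq_of_mult_eq[of _ "ball 0 1"]) (auto simp: P_def cardioid_fun_def)
  moreover have "deriv P 0 = deriv w 0"
  proof (rule DERIV_imp_deriv)
    have "(w has_field_derivative deriv w 0) (at 0)"
      using w(1) by (intro holomorphic_derivI[of _ "ball 0 1"]) auto
    then show "(P has_field_derivative deriv w 0) (at 0)"
      unfolding P_def cardioid_fun_def using w(3) by (auto intro!: derivative_eq_intros)
  qed
  moreover have "cmod (deriv w 0) \<le> 1"
    using w by (intro Schwarz_Lemma(2)[of w 0]) (auto simp: image_subset_iff)
  ultimately show ?thesis by (simp add: coeff2_def)
qed

definition car_extremal :: "complex \<Rightarrow> complex" where
  "car_extremal z = z * exp (z + z^2 / 4)"

lemma deriv_car_extremal: "deriv car_extremal z = exp (z + z^2 / 4) * cardioid_fun z"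
  unfolding car_extremal_def cardioid_fun_def
  by (rule DERIV_imp_deriv) (auto intro!: derivative_eq_intros simp: power2_eq_square algebra_simps)

lemma S_car_car_extremal: "S_car car_extremal"
  unfolding S_car_def classA_def subordinate_def
proof (intro conjI exI[of _ "\<lambda>z. z"])
  show "\<forall>z\<in>unit_disc. starquot car_extremal z = cardioid_fun z"
    by (simp add: starquot_def deriv_car_extremal car_extremal_def cardioid_fun_def)
  show "car_extremal holomorphic_on unit_disc"
    unfolding car_extremal_def by (intro holomorphic_intros) auto
qed (auto simp: car_extremal_def deriv_car_extremal cardioid_fun_def)

lemma coeff2_car_extremal: "coeff2 car_extremal = 1"
proof -
  have "deriv (deriv car_extremal) 0 = 2"
    unfolding deriv_car_extremal[abs_def] cardioid_fun_def
    by (rule DERIV_imp_deriv) (auto intro!: derivative_eq_intros)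
  then show ?thesis by (simp add: coeff2_def)
qed

lemma not_inj_on_quad_1:
  assumes "1/2 < r" shows "\<not> inj_on (quad 1) (ball 0 r)"
proof
  define e where "e = (r - 1/2) / 2"
  define z1 z2 where "z1 = -1/2 + e" and "z2 = -1/2 - e"
  assume "inj_on (quad 1) (ball 0 r)"
  moreover have "\<bar>z1\<bar> < r" "\<bar>z2\<bar> < r" using assms by (auto simp: z1_def z2_def e_def abs_less_iff field_simps)
  then have "complex_of_real z1 \<in> ball 0 r" "complex_of_real z2 \<in> ball 0 r" by simp_all
  moreover have "quad 1 z1 = quad 1 z2"
    by (simp add: quad_def z1_def z2_def power2_eq_square algebra_simps)
  ultimately have "z1 = z2" by (auto dest: inj_onD)
  with assms show False by (simp add: z1_def z2_def e_def)
qed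

lemma Re_quad_1_gt:
  assumes z: "cmod z < r" and r: "r \<le> 1/2" and real: "Im (quad 1 z) = 0"
  shows "r^2 - r < Re (quad 1 z)"
proof -
  have "\<bar>Re z\<bar> < r" using z abs_Re_le_cmod[of z] by linarith
  have "Im z * (1 + 2 * Re z) = 0" using real by (simp add: quad_def Im_power2 algebra_simps)
  moreover have "0 < 1 + 2 * Re z" using \<open>\<bar>Re z\<bar> < r\<close> r by linarith
  ultimately have "Im z = 0" by simp
  have "0 < (Re z + r) * (Re z - r + 1)" using \<open>\<bar>Re z\<bar> < r\<close> r by (intro mult_pos_pos) auto
  then show ?thesis using \<open>Im z = 0\<close> by (simp add: quad_def Re_power2 power2_eq_square algebra_simps)
qed

lemma not_convex_in_quad_1:
  assumes r: "1/4 < r" shows "\<not> convex_in (quad 1) r"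
proof (cases "1/2 < r")
  case True
  then show ?thesis using not_inj_on_quad_1 by (simp add: convex_in_def)
next
  case False
  show ?thesis
  proof
    assume "convex_in (quad 1) r"
    then have convex: "convex (quad 1 ` ball 0 r)" by (simp add: convex_in_def)
    define y where "y = sqrt ((r - 1/4) / 2)"
    have y2: "y^2 = (r - 1/4) / 2" using r by (simp add: y_def)
    define z1 z2 where "z1 = Complex (-1/4) y" and "z2 = Complex (-1/4) (-y)"
    have gap: "0 < (r - 1/4)^2" using r by simp
    have "r^2 - (1/16 + y^2) = (r - 1/4)^2" unfolding y2 by (simp add: power2_eq_square field_simps)
    then have "1/16 + y^2 < r^2" using gap by linarith
    then have "cmod z1 ^ 2 < r^2" "cmod z2 ^ 2 < r^2" by (simp_all add: z1_def z2_def cmod_power2 power_divide)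
    then have "z1 \<in> ball 0 r" "z2 \<in> ball 0 r" using r by (auto intro: power2_less_imp_less)
    then have "(1/2) *\<^sub>R quad 1 z1 + (1/2) *\<^sub>R quad 1 z2 \<in> quad 1 ` ball 0 r"
      by (intro convexD[OF convex]) auto
    moreover have "(1/2) *\<^sub>R quad 1 z1 + (1/2) *\<^sub>R quad 1 z2 = of_real (-3/16 - y^2)"
      by (simp add: z1_def z2_def quad_def complex_eq_iff scaleR_conv_of_real power2_eq_square)
    ultimately obtain z where "cmod z < r" "quad 1 z = of_real (-3/16 - y^2)" by auto
    then have "r^2 - r < -3/16 - y^2" using Re_quad_1_gt[of z r] False by simp
    moreover have "r^2 - r - (-3/16 - y^2) = (r - 1/4)^2" unfolding y2 by (simp add: power2_eq_square field_simps)
    ultimately show False using gap by linarith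
  qed
qed

lemma cardioid_fun_eq_half_iff: "cardioid_fun v = 1/2 \<longleftrightarrow> v = -1"
proof
  assume half: "cardioid_fun v = 1/2"
  have "(v + 1)^2 = 2 * cardioid_fun v - 1"
    by (simp add: cardioid_fun_def power2_eq_square field_simps)
  also have "\<dots> = 0" by (simp add: half)
  finally show "v = -1" by (simp add: add_eq_0_iff2)
qed (simp add: cardioid_fun_def)

lemma not_S_car_quad:
  assumes "1/3 < \<rho>" shows "\<not> S_car (quad (of_real \<rho>))"
proof
  assume "S_car (quad (of_real \<rho>))"
  then obtain w where w: "w ` unit_disc \<subseteq> unit_disc"
    and sub: "\<forall>z\<in>unit_disc. starquot (quad (of_real \<rho>)) z = cardioid_fun (w z)"
    by (auto simp: S_car_def subordinate_def)
  define z where "z = complex_of_real (- 1 / (3 * \<rho>))"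
  have "cmod z = \<bar>- 1 / (3 * \<rho>)\<bar>" unfolding z_def by (rule norm_of_real)
  then have "z \<in> unit_disc" using assms by (simp add: unit_disc_def)
  moreover have "of_real \<rho> * z = - 1/3" using assms by (simp add: z_def)
  then have "starquot (quad (of_real \<rho>)) z = 1/2" by (simp add: starquot_quad)
  ultimately have "cardioid_fun (w z) = 1/2" using sub by metis
  then have "w z = -1" by (simp only: cardioid_fun_eq_half_iff)
  with w \<open>z \<in> unit_disc\<close> show False by (force simp: unit_disc_def)
qed

theorem theorem3p4:
  shows "(\<forall>f. S_car f \<longrightarrow>
            starlike_in (partial2 f) (1/2) \<and>
            convex_in (partial2 f) (1/4) \<and>
            (\<forall>\<rho>::real. 0 < \<rho> \<and> \<rho> \<le> 1/3 \<longrightarrow>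
               S_car (\<lambda>z. partial2 f (complex_of_real \<rho> * z) / complex_of_real \<rho>)))
       \<and> (\<forall>r::real. r > 1/2 \<longrightarrow> \<not> (\<forall>f. S_car f \<longrightarrow> starlike_in (partial2 f) r))
       \<and> (\<forall>r::real. r > 1/4 \<longrightarrow> \<not> (\<forall>f. S_car f \<longrightarrow> convex_in (partial2 f) r))
       \<and> (\<forall>r::real. r > 1/3 \<longrightarrow> \<not> (\<forall>f. S_car f \<longrightarrow> (\<forall>\<rho>::real. 0 < \<rho> \<and> \<rho> \<le> r \<longrightarrow>
               S_car (\<lambda>z. partial2 f (complex_of_real \<rho> * z) / complex_of_real \<rho>))))"
proof (intro conjI allI impI)
  fix f assume "S_car f"
  then have b: "cmod (coeff2 f) \<le> 1" by (rule norm_coeff2_le_1)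
  then show "starlike_in (partial2 f) (1/2)" "convex_in (partial2 f) (1/4)"
    by (simp_all add: partial2_eq_quad starlike_in_quad convex_in_quad)
  fix \<rho> :: real assume \<rho>: "0 < \<rho> \<and> \<rho> \<le> 1/3"
  then have "cmod (coeff2 f * of_real \<rho>) \<le> 1/3"
    using mult_mono[OF b, of \<rho> "1/3"] by (simp add: norm_mult)
  then show "S_car (\<lambda>z. partial2 f (complex_of_real \<rho> * z) / complex_of_real \<rho>)"
    using \<rho> by (simp add: partial2_dilation_eq_quad S_car_quad)
next
  fix r :: real assume "1/2 < r"
  then show "\<not> (\<forall>f. S_car f \<longrightarrow> starlike_in (partial2 f) r)"
    using S_car_car_extremal not_inj_on_quad_1
    by (auto simp: partial2_eq_quad coeff2_car_extremal starlike_in_def)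
next
  fix r :: real assume "1/4 < r"
  then show "\<not> (\<forall>f. S_car f \<longrightarrow> convex_in (partial2 f) r)"
    using S_car_car_extremal not_convex_in_quad_1
    by (auto simp: partial2_eq_quad coeff2_car_extremal)
next
  fix r :: real assume "1/3 < r"
  then have "\<not> S_car (\<lambda>z. partial2 car_extremal (complex_of_real r * z) / complex_of_real r)"
    by (simp add: partial2_dilation_eq_quad coeff2_car_extremal not_S_car_quad)
  moreover have "0 < r \<and> r \<le> r" using \<open>1/3 < r\<close> by simp
  ultimately show "\<not> (\<forall>f. S_car f \<longrightarrow> (\<forall>\<rho>::real. 0 < \<rho> \<and> \<rho> \<le> r \<longrightarrow>
               S_car (\<lambda>z. partial2 f (complex_of_real \<rho> * z) / complex_of_real \<rho>)))"
    using S_car_car_extremal by blast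
qed

end
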